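(* Let $K$ be a field, $b\ge2$ an integer, and let $M=(m_{i,j})_{i,j\ge0}$ be an infinite matrix over $K$ that is $b$-autosimilar and non-degenerate. Then there is a factorization $M=LDU$ where $L$, $D$, $U$ are $b$-autosimilar infinite matrices, $L$ is unipotent lower-triangular, $D$ is diagonal, and $U$ is unipotent upper-triangular.
   Context: An infinite matrix $M=(m_{i,j})_{i,j\ge0}$ is $b$-autosimilar if $m_{0,0}=1$ and $m_{s,t}=\prod_i m_{\sigma_i,\tau_i}$ whenever $s=\sum_i\sigma_ib^i$, $t=\sum_i\tau_ib^i$ are base-$b$ expansions with $\sigma_i,\tau_i\in\{0,\dots,b-1\}$. $M(n)$ denotes the submatrix $(m_{i,j})_{0\le i,j<n}$. A $b$-autosimilar $M$ is non-degenerate if $\det(M(n))$ is invertible (nonzero) for $n=2,\dots,b$. The product $LDU$ of infinite triangular/diagonal matrices is defined entrywise by finite sums. *)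

theory Defs
  imports "Jordan_Normal_Form.Determinant"
begin

definition autosimilar :: "nat \<Rightarrow> (nat \<Rightarrow> nat \<Rightarrow> 'a::comm_ring_1) \<Rightarrow> bool" where
  "autosimilar b m \<longleftrightarrow> m 0 0 = 1 \<and>
     (\<forall>n s t. s < b ^ n \<and> t < b ^ n \<longrightarrow>
        m s t = (\<Prod>i<n. m (s div b ^ i mod b) (t div b ^ i mod b)))"

definition submat :: "(nat \<Rightarrow> nat \<Rightarrow> 'a) \<Rightarrow> nat \<Rightarrow> 'a mat" where
  "submat m n = mat n n (\<lambda>(i, j). m i j)"

definition nondegenerate :: "nat \<Rightarrow> (nat \<Rightarrow> nat \<Rightarrow> 'a::field) \<Rightarrow> bool" where
  "nondegenerate b m \<longleftrightarrow> autosimilar b m \<and> (\<forall>n\<in>{2..b}. det (submat m n) \<noteq> 0)"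

definition unipotent_lower :: "(nat \<Rightarrow> nat \<Rightarrow> 'a::comm_ring_1) \<Rightarrow> bool" where
  "unipotent_lower L \<longleftrightarrow> (\<forall>i. L i i = 1) \<and> (\<forall>i j. i < j \<longrightarrow> L i j = 0)"

definition unipotent_upper :: "(nat \<Rightarrow> nat \<Rightarrow> 'a::comm_ring_1) \<Rightarrow> bool" where
  "unipotent_upper U \<longleftrightarrow> (\<forall>i. U i i = 1) \<and> (\<forall>i j. j < i \<longrightarrow> U i j = 0)"

definition diagonal_inf :: "(nat \<Rightarrow> nat \<Rightarrow> 'a::comm_ring_1) \<Rightarrow> bool" where
  "diagonal_inf D \<longleftrightarrow> (\<forall>i j. i \<noteq> j \<longrightarrow> D i j = 0)"

text \<open>Product L D U of lower-triangular L, diagonal D, upper-triangular U: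
  the entrywise finite sum (only indices i <= s, j <= t can contribute).\<close>
definition LDU_prod :: "(nat \<Rightarrow> nat \<Rightarrow> 'a::comm_ring_1) \<Rightarrow> (nat \<Rightarrow> nat \<Rightarrow> 'a) \<Rightarrow> (nat \<Rightarrow> nat \<Rightarrow> 'a) \<Rightarrow> nat \<Rightarrow> nat \<Rightarrow> 'a" where
  "LDU_prod L D U s t = (\<Sum>i\<le>s. \<Sum>j\<le>t. L s i * D i j * U j t)"

end

theory Submission
  imports Defs
begin

text \<open>An autosimilar matrix is the infinite Kronecker power of its corner \<open>M(b)\<close>, and the
  Kronecker power of a product is the product of the Kronecker powers: summing, over
  \<open>i < b^n\<close>, a product indexed by the base-\<open>b\<close> digits of \<open>i\<close> gives the product of
  the digitwise sums. Non-degeneracy says that the leading principal minors of \<open>M(b)\<close>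
  are nonzero, so Doolittle's recursion factors \<open>M(b) = L\<^sub>0 D\<^sub>0 U\<^sub>0\<close>, and the
  autosimilar extensions of \<open>L\<^sub>0\<close>, \<open>D\<^sub>0\<close>, \<open>U\<^sub>0\<close> multiply to \<open>M\<close>. They stay
  triangular because \<open>i < j\<close> forces some digit of \<open>i\<close> below the corresponding digit of \<open>j\<close>.\<close>

abbreviation digit :: "nat \<Rightarrow> nat \<Rightarrow> nat \<Rightarrow> nat" where
  "digit b k s \<equiv> s div b ^ k mod b"

lemma digit_eq_0:
  assumes "s < b ^ n" "n \<le> k"
  shows "digit b k s = 0"
proof (cases "b = 0")
  case False
  then have "b ^ n \<le> b ^ k" using assms(2) by (simp add: power_increasing)
  then show ?thesis using assms(1) by simp
qed (use assms in \<open>cases n; simp\<close>)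

lemma digit_Suc_mult_add:
  fixes b :: nat
  assumes "c < b"
  shows "digit b (Suc k) (m * b + c) = digit b k m"
  using assms by (simp add: div_mult2_eq mult.commute)

lemma less_power_add:
  fixes b :: nat
  assumes "1 < b"
  shows "s < b ^ (s + n)"
proof -
  have "b ^ s \<le> b ^ (s + n)" using assms by (simp add: power_increasing)
  then show ?thesis using power_gt_expt[of b s] assms by linarith
qed

lemma sum_lessThan_mult:
  fixes m k :: nat
  shows "(\<Sum>i<m * k. g i) = (\<Sum>q<m. \<Sum>r<k. g (q * k + r))"
proof -
  have "(\<Sum>i<m * k. g i) = (\<Sum>q<m. \<Sum>i\<in>{q * k..<q * k + k}. g i)"
    by (rule sum.nat_group[symmetric])
  also have "\<dots> = (\<Sum>q<m. \<Sum>r<k. g (q * k + r))"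
    by (simp add: sum.shift_bounds_nat_ivl[where m = 0, simplified] add.commute atLeast0LessThan)
  finally show ?thesis .
qed

lemma sum_prod_digits:
  fixes g :: "nat \<Rightarrow> nat \<Rightarrow> 'a::comm_semiring_1"
  assumes "b > 0"
  shows "(\<Sum>i<b ^ n. \<Prod>k<n. g k (digit b k i)) = (\<Prod>k<n. \<Sum>c<b. g k c)"
proof (induction n arbitrary: g)
  case 0
  then show ?case by simp
next
  case (Suc n)
  have "(\<Sum>i<b ^ Suc n. \<Prod>k<Suc n. g k (digit b k i))
      = (\<Sum>m<b ^ n. \<Sum>c<b. \<Prod>k<Suc n. g k (digit b k (m * b + c)))"
    by (simp only: power_Suc2 sum_lessThan_mult)
  also have "\<dots> = (\<Sum>m<b ^ n. \<Sum>c<b. g 0 c * (\<Prod>k<n. g (Suc k) (digit b k m)))"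
    unfolding prod.lessThan_Suc_shift by (intro sum.cong refl) (simp add: digit_Suc_mult_add del: power_Suc)
  also have "\<dots> = (\<Sum>c<b. g 0 c) * (\<Sum>m<b ^ n. \<Prod>k<n. g (Suc k) (digit b k m))"
    by (simp add: sum_distrib_left sum_distrib_right sum.swap[of _ "{..<b}"])
  also have "\<dots> = (\<Prod>k<Suc n. \<Sum>c<b. g k c)"
    by (simp only: Suc.IH[of "\<lambda>k. g (Suc k)"] prod.lessThan_Suc_shift)
  finally show ?case .
qed

lemma autosimilarD:
  assumes "autosimilar b A" "s < b ^ n" "t < b ^ n"
  shows "A s t = (\<Prod>k<n. A (digit b k s) (digit b k t))"
  using assms unfolding autosimilar_def by blast

lemma autosimilar_eq_0:
  assumes "autosimilar b A" "1 < b" "A (digit b k s) (digit b k t) = 0"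
  shows "A s t = 0"
proof -
  have "s < b ^ (s + t + Suc k)" "t < b ^ (s + t + Suc k)"
    using less_power_add[OF assms(2), of s "t + Suc k"] less_power_add[OF assms(2), of t "s + Suc k"]
    by (simp_all add: ac_simps)
  then have "A s t = (\<Prod>j<s + t + Suc k. A (digit b j s) (digit b j t))"
    by (rule autosimilarD[OF assms(1)])
  also have "\<dots> = 0"
    using assms(3) by (intro prod_zero) auto
  finally show ?thesis .
qed

lemma autosimilar_diag_eq_1:
  assumes "autosimilar b A" "1 < b" "\<forall>c<b. A c c = 1"
  shows "A s s = 1"
proof -
  have "s < b ^ s"
    using less_power_add[OF assms(2), of s 0] by simp
  then have "A s s = (\<Prod>k<s. A (digit b k s) (digit b k s))"
    using autosimilarD[OF assms(1)] by blast
  also have "\<dots> = 1"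
    using assms(2,3) by (intro prod.neutral) simp
  finally show ?thesis .
qed

lemma exists_digit_less:
  fixes b :: nat
  assumes "1 < b" "s < t"
  shows "\<exists>k. digit b k s < digit b k t"
  using assms(2)
proof (induction t arbitrary: s rule: less_induct)
  case (less t)
  show ?case
  proof (cases "s mod b < t mod b")
    case True
    then show ?thesis by (intro exI[of _ 0]) simp
  next
    case False
    then have "s div b < t div b"
      using less.prems div_mod_decomp[of s b] div_mod_decomp[of t b]
      by (metis add_le_mono leI mult_le_mono1 not_less)
    moreover have "t div b < t"
      using less.prems assms(1) by simp
    ultimately obtain k where "digit b k (s div b) < digit b k (t div b)"
      using less.IH by blast
    then show ?thesis
      by (intro exI[of _ "Suc k"]) (simp add: div_mult2_eq)
  qed
qed

lemma autosimilar_unipotent_lower: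
  assumes "autosimilar b A" "1 < b"
    and "\<forall>c<b. A c c = 1" "\<forall>c d. c < d \<longrightarrow> d < b \<longrightarrow> A c d = 0"
  shows "unipotent_lower A"
  unfolding unipotent_lower_def
proof (intro conjI allI impI)
  show "A i i = 1" for i
    by (rule autosimilar_diag_eq_1[OF assms(1-3)])
  fix i j :: nat
  assume "i < j"
  from exists_digit_less[OF assms(2) this]
  obtain k where "digit b k i < digit b k j" ..
  moreover have "digit b k j < b"
    using assms(2) by simp
  ultimately have "A (digit b k i) (digit b k j) = 0"
    using assms(4) by blast
  then show "A i j = 0"
    by (rule autosimilar_eq_0[OF assms(1,2)])
qed

lemma autosimilar_unipotent_upper:
  assumes "autosimilar b A" "1 < b"
    and "\<forall>c<b. A c c = 1" "\<forall>c d. d < c \<longrightarrow> c < b \<longrightarrow> A c d = 0"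
  shows "unipotent_upper A"
  unfolding unipotent_upper_def
proof (intro conjI allI impI)
  show "A i i = 1" for i
    by (rule autosimilar_diag_eq_1[OF assms(1-3)])
  fix i j :: nat
  assume "j < i"
  from exists_digit_less[OF assms(2) this]
  obtain k where "digit b k j < digit b k i" ..
  moreover have "digit b k i < b"
    using assms(2) by simp
  ultimately have "A (digit b k i) (digit b k j) = 0"
    using assms(4) by blast
  then show "A i j = 0"
    by (rule autosimilar_eq_0[OF assms(1,2)])
qed

lemma autosimilar_diagonal:
  assumes "autosimilar b A" "1 < b" "\<forall>c<b. \<forall>d<b. c \<noteq> d \<longrightarrow> A c d = 0"
  shows "diagonal_inf A"
  unfolding diagonal_inf_def
proof (intro allI impI)
  fix i j :: nat
  assume "i \<noteq> j"
  then have "\<exists>k. digit b k i \<noteq> digit b k j"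
    using exists_digit_less[OF assms(2), of i j] exists_digit_less[OF assms(2), of j i]
    by (auto simp: neq_iff)
  then obtain k where "digit b k i \<noteq> digit b k j" ..
  moreover have "digit b k i < b" "digit b k j < b"
    using assms(2) by simp_all
  ultimately have "A (digit b k i) (digit b k j) = 0"
    using assms(3) by blast
  then show "A i j = 0"
    by (rule autosimilar_eq_0[OF assms(1,2)])
qed

text \<open>The autosimilar matrix with corner \<open>f\<close>; the cutoff \<open>s + t\<close> exceeds the
  number of base-\<open>b\<close> digits of \<open>s\<close> and of \<open>t\<close>.\<close>
definition autosimilar_ext :: "nat \<Rightarrow> (nat \<Rightarrow> nat \<Rightarrow> 'a::comm_ring_1) \<Rightarrow> nat \<Rightarrow> nat \<Rightarrow> 'a" where
  "autosimilar_ext b f s t = (\<Prod>k<s + t. f (digit b k s) (digit b k t))"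

lemma prod_digits_cutoff:
  fixes f :: "nat \<Rightarrow> nat \<Rightarrow> 'a::comm_monoid_mult"
  assumes "f 0 0 = 1" "s < b ^ n" "t < b ^ n" "n \<le> m"
  shows "(\<Prod>k<m. f (digit b k s) (digit b k t)) = (\<Prod>k<n. f (digit b k s) (digit b k t))"
  using assms by (intro prod.mono_neutral_right) (auto simp: digit_eq_0)

lemma autosimilar_ext_eq:
  fixes f :: "nat \<Rightarrow> nat \<Rightarrow> 'a::comm_ring_1"
  assumes "f 0 0 = 1" "1 < b" "s < b ^ n" "t < b ^ n"
  shows "autosimilar_ext b f s t = (\<Prod>k<n. f (digit b k s) (digit b k t))"
proof -
  have "s < b ^ (s + t)" "t < b ^ (s + t)"
    using less_power_add[OF assms(2), of s t] less_power_add[OF assms(2), of t s] by (simp_all add: add.commute)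
  then show ?thesis
    unfolding autosimilar_ext_def
    using prod_digits_cutoff[where f = f, OF assms(1), of s b "s + t" t "max n (s + t)"]
      prod_digits_cutoff[where f = f, OF assms(1,3,4), of "max n (s + t)"]
    by simp
qed

lemma autosimilar_ext_corner:
  fixes f :: "nat \<Rightarrow> nat \<Rightarrow> 'a::comm_ring_1"
  assumes "f 0 0 = 1" "1 < b" "s < b" "t < b"
  shows "autosimilar_ext b f s t = f s t"
  using autosimilar_ext_eq[where f = f, OF assms(1,2), of s 1 t] assms(3,4) by simp

lemma autosimilar_autosimilar_ext:
  fixes f :: "nat \<Rightarrow> nat \<Rightarrow> 'a::comm_ring_1"
  assumes "f 0 0 = 1" "1 < b"
  shows "autosimilar b (autosimilar_ext b f)"
  unfolding autosimilar_def
proof (intro conjI allI impI)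
  show "autosimilar_ext b f 0 0 = 1"
    by (simp add: autosimilar_ext_def)
  fix n s t
  assume "s < b ^ n \<and> t < b ^ n"
  then show "autosimilar_ext b f s t
      = (\<Prod>k<n. autosimilar_ext b f (digit b k s) (digit b k t))"
    using assms by (simp add: autosimilar_ext_eq autosimilar_ext_corner)
qed

lemma LDU_prod_eq_sum_diag:
  assumes "\<forall>i j. i < j \<longrightarrow> L i j = 0" "diagonal_inf D" "\<forall>i j. j < i \<longrightarrow> U i j = 0"
    and "s < N" "t < N"
  shows "LDU_prod L D U s t = (\<Sum>i<N. L s i * D i i * U i t)"
proof -
  have "LDU_prod L D U s t = (\<Sum>i<N. \<Sum>j\<le>t. L s i * D i j * U j t)"
    unfolding LDU_prod_def by (rule sum.mono_neutral_left) (use assms(1,4) in auto)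
  also have "\<dots> = (\<Sum>i<N. \<Sum>j<N. L s i * D i j * U j t)"
    by (intro sum.cong refl sum.mono_neutral_left) (use assms(3,5) in auto)
  also have "\<dots> = (\<Sum>i<N. L s i * D i i * U i t)"
  proof (intro sum.cong refl)
    fix i
    assume "i \<in> {..<N}"
    have "(\<Sum>j<N. L s i * D i j * U j t) = (\<Sum>j<N. if j = i then L s i * D i i * U i t else 0)"
      using assms(2) by (intro sum.cong) (auto simp: diagonal_inf_def)
    also have "\<dots> = L s i * D i i * U i t"
      using \<open>i \<in> {..<N}\<close> by simp
    finally show "(\<Sum>j<N. L s i * D i j * U j t) = L s i * D i i * U i t" .
  qed
  finally show ?thesis .
qed

lemma autosimilar_sum_diag_eq_prod:
  assumes "autosimilar b L" "autosimilar b D" "autosimilar b U" "b > 0"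
    and "s < b ^ n" "t < b ^ n"
  shows "(\<Sum>i<b ^ n. L s i * D i i * U i t)
       = (\<Prod>k<n. \<Sum>c<b. L (digit b k s) c * D c c * U c (digit b k t))"
proof -
  have "(\<Sum>i<b ^ n. L s i * D i i * U i t)
      = (\<Sum>i<b ^ n. \<Prod>k<n. L (digit b k s) (digit b k i) * D (digit b k i) (digit b k i)
                              * U (digit b k i) (digit b k t))"
  proof (intro sum.cong refl)
    fix i
    assume "i \<in> {..<b ^ n}"
    then have "i < b ^ n" by simp
    then show "L s i * D i i * U i t
        = (\<Prod>k<n. L (digit b k s) (digit b k i) * D (digit b k i) (digit b k i)
                    * U (digit b k i) (digit b k t))"
      by (simp only: autosimilarD[OF assms(1,5), of i] autosimilarD[OF assms(2), of i n i]
          autosimilarD[OF assms(3) _ assms(6), of i] prod.distrib)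
  qed
  also have "\<dots> = (\<Prod>k<n. \<Sum>c<b. L (digit b k s) c * D c c * U c (digit b k t))"
    using sum_prod_digits[OF assms(4), where g = "\<lambda>k c. L (digit b k s) c * D c c * U c (digit b k t)"]
    by simp
  finally show ?thesis .
qed

lemma autosimilar_eq_LDU_prod:
  assumes "autosimilar b M" "autosimilar b L" "autosimilar b D" "autosimilar b U" "1 < b"
    and "\<forall>i j. i < j \<longrightarrow> L i j = 0" "diagonal_inf D" "\<forall>i j. j < i \<longrightarrow> U i j = 0"
    and corner: "\<forall>x<b. \<forall>y<b. M x y = (\<Sum>c<b. L x c * D c c * U c y)"
  shows "M = LDU_prod L D U"
proof (intro ext)
  fix s t
  have s: "s < b ^ (s + t)" and t: "t < b ^ (s + t)"
    using less_power_add[OF assms(5), of s t] less_power_add[OF assms(5), of t s]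
    by (simp_all add: add.commute)
  have "LDU_prod L D U s t = (\<Sum>i<b ^ (s + t). L s i * D i i * U i t)"
    using assms(6-8) s t by (rule LDU_prod_eq_sum_diag)
  also have "\<dots> = (\<Prod>k<s + t. \<Sum>c<b. L (digit b k s) c * D c c * U c (digit b k t))"
    using assms(2-5) s t by (intro autosimilar_sum_diag_eq_prod) simp_all
  also have "\<dots> = (\<Prod>k<s + t. M (digit b k s) (digit b k t))"
    using corner assms(5) by simp
  also have "\<dots> = M s t"
    using autosimilarD[OF assms(1) s t] by simp
  finally show "M s t = LDU_prod L D U s t" by simp
qed

text \<open>Doolittle's recursion for \<open>A = L U\<close> with \<open>L\<close> unit lower triangular:
  \<open>doolittle A i j\<close> is the entry of \<open>U\<close> for \<open>i \<le> j\<close> and that of \<open>L\<close> for \<open>i > j\<close>.\<close>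
function doolittle :: "(nat \<Rightarrow> nat \<Rightarrow> 'a::field) \<Rightarrow> nat \<Rightarrow> nat \<Rightarrow> 'a" where
  "doolittle A i j =
     (if i \<le> j then A i j - (\<Sum>k<i. doolittle A i k * doolittle A k j)
      else (A i j - (\<Sum>k<j. doolittle A i k * doolittle A k j)) / doolittle A j j)"
  by pat_completeness auto
termination
  by (relation "measure (\<lambda>(A, i, j). 2 * min i j + (if i \<le> j then 0 else 1))") auto

declare doolittle.simps [simp del]

definition lu_lower :: "(nat \<Rightarrow> nat \<Rightarrow> 'a::field) \<Rightarrow> nat \<Rightarrow> nat \<Rightarrow> 'a" where
  "lu_lower A i j = (if i = j then 1 else if j < i then doolittle A i j else 0)"

definition lu_upper :: "(nat \<Rightarrow> nat \<Rightarrow> 'a::field) \<Rightarrow> nat \<Rightarrow> nat \<Rightarrow> 'a" where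
  "lu_upper A i j = (if i \<le> j then doolittle A i j else 0)"

lemma doolittle_upper:
  "i \<le> j \<Longrightarrow> doolittle A i j = A i j - (\<Sum>k<i. doolittle A i k * doolittle A k j)"
  by (subst doolittle.simps) simp

lemma doolittle_lower:
  "j < i \<Longrightarrow> doolittle A i j = (A i j - (\<Sum>k<j. doolittle A i k * doolittle A k j)) / doolittle A j j"
  by (subst doolittle.simps) simp

lemma lu_sum_eq:
  fixes A :: "nat \<Rightarrow> nat \<Rightarrow> 'a::field"
  assumes "t < s \<Longrightarrow> doolittle A t t \<noteq> 0" "min s t < n"
  shows "A s t = (\<Sum>c<n. lu_lower A s c * lu_upper A c t)"
proof -
  have "(\<Sum>c<n. lu_lower A s c * lu_upper A c t) = (\<Sum>c<Suc (min s t). lu_lower A s c * lu_upper A c t)"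
    using assms(2) by (intro sum.mono_neutral_right) (auto simp: lu_lower_def lu_upper_def)
  also have "\<dots> = (\<Sum>c<min s t. doolittle A s c * doolittle A c t)
                   + lu_lower A s (min s t) * lu_upper A (min s t) t"
    by (simp add: lu_lower_def lu_upper_def)
  also have "\<dots> = A s t"
  proof (cases "s \<le> t")
    case True
    then show ?thesis
      by (simp add: doolittle_upper[of s t] lu_lower_def lu_upper_def min_def)
  next
    case False
    then show ?thesis
      using assms(1) by (simp add: doolittle_lower[of t s] lu_lower_def lu_upper_def min_def)
  qed
  finally show ?thesis by simp
qed

lemma det_submat_eq_prod_pivots:
  fixes A :: "nat \<Rightarrow> nat \<Rightarrow> 'a::field"
  assumes "\<And>c. Suc c < n \<Longrightarrow> doolittle A c c \<noteq> 0"
  shows "det (submat A n) = (\<Prod>i<n. doolittle A i i)"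
proof -
  let ?L = "submat (lu_lower A) n" and ?U = "submat (lu_upper A) n"
  have carrier: "?L \<in> carrier_mat n n" "?U \<in> carrier_mat n n"
    by (simp_all add: submat_def)
  have "submat A n = ?L * ?U"
  proof (rule eq_matI)
    fix i j
    assume "i < dim_row (?L * ?U)" "j < dim_col (?L * ?U)"
    then have "i < n" "j < n"
      using carrier by auto
    then show "submat A n $$ (i, j) = (?L * ?U) $$ (i, j)"
      using assms lu_sum_eq[of j i A n]
      by (simp add: submat_def scalar_prod_def atLeast0LessThan)
  qed (simp_all add: submat_def)
  moreover have "det ?L = 1"
    using det_lower_triangular[OF _ carrier(1)]
    by (simp add: submat_def lu_lower_def prod_list_diag_prod)
  moreover have "det ?U = (\<Prod>i<n. doolittle A i i)"
    using det_upper_triangular[OF _ carrier(2)]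
    by (simp add: submat_def lu_upper_def upper_triangular_def prod_list_diag_prod atLeast0LessThan)
  ultimately show ?thesis
    using det_mult[OF carrier] by simp
qed

lemma doolittle_pivot_nonzero:
  fixes A :: "nat \<Rightarrow> nat \<Rightarrow> 'a::field"
  assumes "A 0 0 = 1" "\<forall>n\<in>{2..b}. det (submat A n) \<noteq> 0" "j < b"
  shows "doolittle A j j \<noteq> 0"
  using assms(3)
proof (induction j rule: less_induct)
  case (less j)
  show ?case
  proof (cases j)
    case 0
    then show ?thesis
      using assms(1) doolittle_upper[of 0 0 A] by simp
  next
    case (Suc i)
    have "det (submat A (Suc j)) = (\<Prod>i<Suc j. doolittle A i i)"
      using less by (intro det_submat_eq_prod_pivots) simp
    moreover have "det (submat A (Suc j)) \<noteq> 0"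
      using assms(2) less.prems Suc by simp
    ultimately show ?thesis by simp
  qed
qed

definition ldu_diag :: "(nat \<Rightarrow> nat \<Rightarrow> 'a::field) \<Rightarrow> nat \<Rightarrow> nat \<Rightarrow> 'a" where
  "ldu_diag A i j = (if i = j then doolittle A i i else 0)"

definition ldu_upper :: "(nat \<Rightarrow> nat \<Rightarrow> 'a::field) \<Rightarrow> nat \<Rightarrow> nat \<Rightarrow> 'a" where
  "ldu_upper A i j = (if i = j then 1 else if i < j then doolittle A i j / doolittle A i i else 0)"

lemma ldu_sum_eq:
  fixes A :: "nat \<Rightarrow> nat \<Rightarrow> 'a::field"
  assumes "\<forall>c<n. doolittle A c c \<noteq> 0" "s < n" "t < n"
  shows "A s t = (\<Sum>c<n. lu_lower A s c * ldu_diag A c c * ldu_upper A c t)"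
proof -
  have "A s t = (\<Sum>c<n. lu_lower A s c * lu_upper A c t)"
    using assms by (intro lu_sum_eq) auto
  also have "\<dots> = (\<Sum>c<n. lu_lower A s c * ldu_diag A c c * ldu_upper A c t)"
    using assms(1) by (intro sum.cong refl) (auto simp: lu_upper_def ldu_diag_def ldu_upper_def)
  finally show ?thesis .
qed

theorem theorem2p1:
  fixes M :: "nat \<Rightarrow> nat \<Rightarrow> 'a::field" and b :: nat
  assumes "b \<ge> 2" and "nondegenerate b M"
  shows "\<exists>L D U. autosimilar b L \<and> autosimilar b D \<and> autosimilar b U \<and>
           unipotent_lower L \<and> diagonal_inf D \<and> unipotent_upper U \<and>
           M = LDU_prod L D U"
proof -
  have b: "1 < b"
    using assms(1) by simp
  have M: "autosimilar b M" and M00: "M 0 0 = 1" and pivots: "\<forall>c<b. doolittle M c c \<noteq> 0"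
    using assms(2) doolittle_pivot_nonzero[of M b]
    unfolding nondegenerate_def autosimilar_def by auto
  define L where "L = autosimilar_ext b (lu_lower M)"
  define D where "D = autosimilar_ext b (ldu_diag M)"
  define U where "U = autosimilar_ext b (ldu_upper M)"
  have corner: "L x y = lu_lower M x y" "D x y = ldu_diag M x y" "U x y = ldu_upper M x y"
    if "x < b" "y < b" for x y
    unfolding L_def D_def U_def using that b M00
    by (simp_all add: autosimilar_ext_corner lu_lower_def ldu_diag_def ldu_upper_def doolittle_upper)
  have "autosimilar b L" "autosimilar b D" "autosimilar b U"
    unfolding L_def D_def U_def using b M00
    by (simp_all add: autosimilar_autosimilar_ext lu_lower_def ldu_diag_def ldu_upper_def doolittle_upper)
  moreover have "unipotent_lower L" "unipotent_upper U" "diagonal_inf D"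
    using calculation b pivots
    by (auto intro!: autosimilar_unipotent_lower autosimilar_unipotent_upper autosimilar_diagonal
        simp: corner lu_lower_def ldu_diag_def ldu_upper_def)
  moreover have "M = LDU_prod L D U"
    using calculation M b pivots
    by (intro autosimilar_eq_LDU_prod)
      (auto simp: corner unipotent_lower_def unipotent_upper_def intro: ldu_sum_eq)
  ultimately show ?thesis by blast
qed

end
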